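(* Let $q$ be an odd prime power and $s=(q-1)/2$. Let $r_0,r_1$ be positive integers such that $s\mid r_0^2-1$ and $2s\mid r_1^2-1$. Then $$f(x)=\tfrac12 x^{r_0}(1+x^s)+\tfrac12 x^{r_1}(1-x^s)$$ is a permutation polynomial of $\mathbb{F}_q$ and is self-inverse, i.e. $f(f(c))=c$ for all $c\in\mathbb{F}_q$.
   Context: A polynomial $f\in\mathbb{F}_q[x]$ is a permutation polynomial of $\mathbb{F}_q$ if it induces a bijection of $\mathbb{F}_q$. *)

theory Defs
  imports "HOL-Computational_Algebra.Polynomial"
begin

definition permutation_polynomial :: "'a::field poly \<Rightarrow> bool" where
  "permutation_polynomial p \<longleftrightarrow> bij (poly p)"

end

theory Submission
  imports Defs
begin

text \<open>Every non-zero \<open>c\<close> in a field with \<open>q = 2s + 1\<close> elements satisfies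
  \<open>c^s = \<plusminus>1\<close>, and \<open>f\<close> agrees with \<open>x^r0\<close> where \<open>c^s = 1\<close> and with \<open>x^r1\<close>
  where \<open>c^s = -1\<close>. Both monomials preserve the sign of \<open>c^s\<close> (for \<open>x^r1\<close> because
  \<open>r1\<close> is odd), and applied twice they give \<open>c^(r0^2) = c\<close> resp. \<open>c^(r1^2) = c\<close>,
  since the order of \<open>c\<close> divides \<open>s\<close> resp. \<open>2s\<close>. So \<open>f\<close> is an involution,
  hence a bijection.\<close>

definition piecewise_monomial_poly :: "nat \<Rightarrow> nat \<Rightarrow> nat \<Rightarrow> 'a::field poly" where
  "piecewise_monomial_poly r0 r1 s =
     smult (inverse 2) (monom 1 r0 * (1 + monom 1 s)) + smult (inverse 2) (monom 1 r1 * (1 - monom 1 s))"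

lemma poly_piecewise_monomial_poly:
  "poly (piecewise_monomial_poly r0 r1 s) c
     = inverse 2 * (c ^ r0 * (1 + c ^ s)) + inverse 2 * (c ^ r1 * (1 - c ^ s))"
  by (simp add: piecewise_monomial_poly_def poly_monom)

lemma poly_piecewise_monomial_poly_0:
  "r0 > 0 \<Longrightarrow> r1 > 0 \<Longrightarrow> poly (piecewise_monomial_poly r0 r1 s) 0 = (0::'a::field)"
  by (simp add: poly_piecewise_monomial_poly power_0_left)

lemma poly_piecewise_monomial_poly_plus:
  fixes c :: "'a::field"
  assumes "(2::'a) \<noteq> 0" and "c ^ s = 1"
  shows "poly (piecewise_monomial_poly r0 r1 s) c = c ^ r0"
  using assms by (simp add: poly_piecewise_monomial_poly field_simps)

lemma poly_piecewise_monomial_poly_minus: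
  fixes c :: "'a::field"
  assumes "(2::'a) \<noteq> 0" and "c ^ s = -1"
  shows "poly (piecewise_monomial_poly r0 r1 s) c = c ^ r1"
  using assms by (simp add: poly_piecewise_monomial_poly field_simps)

lemma power_power_eq_self:
  fixes c :: "'a::monoid_mult"
  assumes "c ^ m = 1" and "m dvd r\<^sup>2 - 1" and "r > 0"
  shows "(c ^ r) ^ r = c"
proof -
  obtain k where "r\<^sup>2 - 1 = m * k"
    using assms(2) by blast
  then have "r * r = Suc (m * k)"
    using assms(3) by (metis Suc_pred' power2_eq_square zero_less_power)
  then show ?thesis
    using assms(1) by (simp add: power_mult[symmetric] power_mult)
qed

lemma odd_if_two_dvd_square_minus_one:
  fixes r :: nat
  assumes "2 dvd r\<^sup>2 - 1" and "r > 0"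
  shows "odd r"
  using assms by (auto simp: power2_eq_square)

lemma piecewise_monomial_poly_involutive_on_roots_of_unity:
  fixes c :: "'a::field"
  assumes two: "(2::'a) \<noteq> 0" and c: "c ^ (2 * s) = 1"
    and r0: "s dvd r0\<^sup>2 - 1" "r0 > 0" and r1: "2 * s dvd r1\<^sup>2 - 1" "r1 > 0"
  shows "poly (piecewise_monomial_poly r0 r1 s) (poly (piecewise_monomial_poly r0 r1 s) c) = c"
proof -
  have "(c ^ s)\<^sup>2 = 1"
    using c by (simp add: power_mult[symmetric] mult.commute)
  then consider "c ^ s = 1" | "c ^ s = -1"
    using power2_eq_1_iff by blast
  then show ?thesis
  proof cases
    case 1
    then have "(c ^ r0) ^ s = 1"
      by (metis power_mult mult.commute power_one)
    with 1 show ?thesis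
      using power_power_eq_self[OF 1 r0] by (simp add: poly_piecewise_monomial_poly_plus[OF two])
  next
    case 2
    have "odd r1"
      using r1 by (intro odd_if_two_dvd_square_minus_one) (auto dest: dvd_mult_left)
    with 2 have "(c ^ r1) ^ s = -1"
      by (metis power_mult mult.commute power_minus_odd power_one)
    with 2 show ?thesis
      using power_power_eq_self[OF c r1] by (simp add: poly_piecewise_monomial_poly_minus[OF two])
  qed
qed

lemma finite_field_power_card_minus_one:
  fixes x :: "'a::{finite,field}"
  assumes "x \<noteq> 0"
  shows "x ^ (card (UNIV :: 'a set) - 1) = 1"
proof -
  have "(\<Prod>y\<in>UNIV-{0}. x * y) = x ^ (card (UNIV :: 'a set) - 1) * \<Prod>(UNIV-{0})"
    by (simp add: prod.distrib mult_ac)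
  moreover have "(\<Prod>y\<in>UNIV-{0}. x * y) = \<Prod>(UNIV-{0})"
    by (rule prod.reindex_bij_witness[of _ "\<lambda>y. y / x" "\<lambda>y. x * y"]) (use assms in auto)
  moreover have "\<Prod>(UNIV-{0::'a}) \<noteq> 0"
    by simp
  ultimately show ?thesis
    by (metis mult_cancel_right2)
qed

lemma of_nat_card_UNIV_eq_0: "of_nat (card (UNIV :: 'a::{finite,ring_1} set)) = (0::'a)"
proof -
  have "(\<Sum>x\<in>(UNIV::'a set). x + 1) = (\<Sum>x\<in>UNIV. x)"
    by (rule sum.reindex_bij_witness[of _ "\<lambda>y. y - 1" "\<lambda>y. y + 1"]) auto
  then show ?thesis
    by (simp add: sum.distrib)
qed

lemma two_neq_zero_if_odd_card:
  assumes "odd (card (UNIV :: 'a::{finite,ring_1} set))"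
  shows "(2::'a) \<noteq> 0"
proof
  assume "(2::'a) = 0"
  then have "CHAR('a) dvd 2" and "CHAR('a) dvd card (UNIV :: 'a set)"
    using of_nat_eq_0_iff_char_dvd[where 'a='a] of_nat_card_UNIV_eq_0[where 'a='a]
    by (metis of_nat_numeral)+
  moreover have "coprime 2 (card (UNIV :: 'a set))"
    using assms by simp
  ultimately show False
    using coprime_common_divisor_nat by fastforce
qed

theorem corollary4p2:
  fixes r0 r1 :: nat and f :: "'a::{finite,field} poly"
  assumes "odd (card (UNIV :: 'a set))"
    and "r0 > 0" and "r1 > 0"
    and "(card (UNIV :: 'a set) - 1) div 2 dvd r0^2 - 1"
    and "2 * ((card (UNIV :: 'a set) - 1) div 2) dvd r1^2 - 1"
    and "f = smult (inverse 2) (monom 1 r0 * (1 + monom 1 ((card (UNIV :: 'a set) - 1) div 2)))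
           + smult (inverse 2) (monom 1 r1 * (1 - monom 1 ((card (UNIV :: 'a set) - 1) div 2)))"
  shows "permutation_polynomial f \<and> (\<forall>c. poly f (poly f c) = c)"
proof -
  define s where "s = (card (UNIV :: 'a set) - 1) div 2"
  have f: "f = piecewise_monomial_poly r0 r1 s"
    using assms(6) by (simp add: piecewise_monomial_poly_def s_def)
  have two: "(2::'a) \<noteq> 0"
    using two_neq_zero_if_odd_card assms(1) .
  have roots: "c ^ (2 * s) = 1" if "c \<noteq> 0" for c :: 'a
    using finite_field_power_card_minus_one[OF that] assms(1) by (simp add: s_def)
  have "poly f (poly f c) = c" for c
  proof (cases "c = 0")
    case True
    then show ?thesis
      by (simp add: f poly_piecewise_monomial_poly_0[OF assms(2,3)])
  next
    case False
    show ?thesis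
      using piecewise_monomial_poly_involutive_on_roots_of_unity[OF two roots[OF False]] assms(2-5)
      by (simp add: f s_def)
  qed
  then show ?thesis
    unfolding permutation_polynomial_def by (auto intro: involuntory_imp_bij)
qed

end
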